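(* Let $Y\in\mathbb{C}^{(n\times n)\cdot d}$, let $f$ be an NC function uniformly analytic in a uniformly open neighbourhood of $Y$, with Taylor–Taylor coefficients $\hat f_{\alpha,\beta;\omega}$ at $Y$ as in the context, and for $1\le a,b\le n$ let $f_{a,b}$ be the formal power series in $dn^2$ non-commuting variables $\{\mathfrak{z}_{i,j,k}:1\le i,j\le n,1\le k\le d\}$, $$f_{a,b}=\sum_{\ell\ge0}\ \sum_{\substack{\alpha=a_0\cdots a_{\ell-1},\ \beta=b_0\cdots b_{\ell-1}\in\mathbb{F}^+_n\\ \omega=w_1\cdots w_\ell\in\mathbb{F}^+_d}}\hat f_{\alpha a,\beta b;\omega}\ \mathfrak{z}_{a_0,b_0,w_1}\mathfrak{z}_{a_1,b_1,w_2}\cdots\mathfrak{z}_{a_{\ell-1},b_{\ell-1},w_\ell}.$$ Then for every $1\le a,b\le n$ the radius of convergence $R_{a,b}$ of $f_{a,b}$ at $0$ is positive.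
   Context: $\mathbb{C}^{(k\times k)\cdot d}$ denotes column $d$-tuples of $k\times k$ matrices with $\|X\|_{\mathrm{col}}$ the operator norm of the stacked matrix; the uniform topology is generated by the sets $\bigsqcup_m\{X\in\mathbb{C}^{(mk\times mk)\cdot d}:\|X-I_m\otimes Z\|_{\mathrm{col}}<r\}$. An NC function is a map on a direct-sum-closed set that is graded, respects direct sums and joint similarities; it is uniformly analytic if its domain is uniformly open and it is locally bounded in the uniform topology. Such $f$ has a Taylor–Taylor expansion at $Y$: unique $|\omega|$-linear maps $f_\omega:(\mathbb{C}^{n\times n})^{|\omega|}\to\mathbb{C}^{n\times n}$ ($\omega\in\mathbb{F}^+_d$, the free monoid on $\{1,\dots,d\}$) with $f(X)=\sum_\omega f_\omega\circ(X-I_m\otimes Y)^{\odot\omega}$ near $Y$ (blockwise application to Haagerup products of $m\times m$ block matrices). Each $f_\omega$ with $|\omega|=\ell$ is written uniquely as $f_\omega(G_1,\dots,G_\ell)=\sum\hat f_{\alpha,\beta;\omega}E_{a_0,b_0}G_1E_{a_1,b_1}\cdots G_\ell E_{a_\ell,b_\ell}$, summing over $\alpha=a_0\cdots a_\ell,\beta=b_0\cdots b_\ell\in\mathbb{F}^+_n$, with $E_{i,j}$ the matrix units. The radius of convergence at $0$ of a formal power series $g=\sum_\nu\hat g_\nu\mathfrak{z}^\nu$ in $N$ non-commuting variables is $R_g$ with $1/R_g=\limsup_{\ell\to\infty}\big(\sum_{|\nu|=\ell}|\hat g_\nu|^2\big)^{1/(2\ell)}$. *)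

theory Defs
  imports "HOL-Analysis.Analysis"
begin

text \<open>Indices are 0-based. A (square) matrix of size s is a function
  nat => nat => complex whose entries outside {..<s} x {..<s} are ignored or zero.
  A d-tuple of s x s matrices is a function nat => nat => nat => complex, X k i j
  being entry (i,j) of the k-th matrix. A point of the nc universe is a pair (s, X)
  (level s). Free-monoid words are lists.\<close>

type_synonym cmat = "nat \<Rightarrow> nat \<Rightarrow> complex"
type_synonym ctup = "nat \<Rightarrow> nat \<Rightarrow> nat \<Rightarrow> complex"

definition wf_tup :: "nat \<Rightarrow> nat \<Rightarrow> ctup \<Rightarrow> bool" where
  "wf_tup d s X \<longleftrightarrow> (\<forall>k i j. (d \<le> k \<or> s \<le> i \<or> s \<le> j) \<longrightarrow> X k i j = 0)"

definition wf_mat :: "nat \<Rightarrow> cmat \<Rightarrow> bool" where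
  "wf_mat s A \<longleftrightarrow> (\<forall>i j. (s \<le> i \<or> s \<le> j) \<longrightarrow> A i j = 0)"

definition mprod :: "nat \<Rightarrow> cmat \<Rightarrow> cmat \<Rightarrow> cmat" where
  "mprod s A B = (\<lambda>i j. if i < s \<and> j < s then (\<Sum>l<s. A i l * B l j) else 0)"

definition idm :: "nat \<Rightarrow> cmat" where
  "idm s = (\<lambda>i j. if i < s \<and> i = j then 1 else 0)"

definition unitm :: "nat \<Rightarrow> nat \<Rightarrow> cmat" where
  "unitm a b = (\<lambda>i j. if i = a \<and> j = b then 1 else 0)"

text \<open>Operator norm of an s x s matrix and column norm of a d-tuple
  (operator norm of the stacked (d s) x s matrix).\<close>
definition op_norm :: "nat \<Rightarrow> cmat \<Rightarrow> real" where
  "op_norm s A = Sup {sqrt (\<Sum>i<s. (cmod (\<Sum>j<s. A i j * v j))\<^sup>2) | v.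
                      (\<Sum>j<s. (cmod (v j))\<^sup>2) \<le> 1}"

definition col_norm :: "nat \<Rightarrow> nat \<Rightarrow> ctup \<Rightarrow> real" where
  "col_norm d s X = Sup {sqrt (\<Sum>k<d. \<Sum>i<s. (cmod (\<Sum>j<s. X k i j * v j))\<^sup>2) | v.
                      (\<Sum>j<s. (cmod (v j))\<^sup>2) \<le> 1}"

text \<open>I_m \<otimes> Z for Z of level t.\<close>
definition kron_id :: "nat \<Rightarrow> nat \<Rightarrow> nat \<Rightarrow> ctup \<Rightarrow> ctup" where
  "kron_id d m t Z = (\<lambda>k i j. if k < d \<and> i < m * t \<and> j < m * t \<and> i div t = j div t
                                then Z k (i mod t) (j mod t) else 0)"

definition tup_diff :: "ctup \<Rightarrow> ctup \<Rightarrow> ctup" where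
  "tup_diff X Z = (\<lambda>k i j. X k i j - Z k i j)"

definition uball :: "nat \<Rightarrow> nat \<Rightarrow> ctup \<Rightarrow> real \<Rightarrow> (nat \<times> ctup) set" where
  "uball d t Z r = {(s, X). \<exists>m\<ge>1. s = m * t \<and> wf_tup d s X \<and>
                       col_norm d s (tup_diff X (kron_id d m t Z)) < r}"

definition uniform_top :: "nat \<Rightarrow> (nat \<times> ctup) topology" where
  "uniform_top d = topology_generated_by
      {uball d t Z r | t Z r. 1 \<le> t \<and> wf_tup d t Z \<and> 0 < r}"

definition tup_dsum :: "nat \<Rightarrow> ctup \<Rightarrow> ctup \<Rightarrow> ctup" where
  "tup_dsum s X X' = (\<lambda>k i j. if i < s \<and> j < s then X k i j
                               else if s \<le> i \<and> s \<le> j then X' k (i - s) (j - s) else 0)"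

definition mat_dsum :: "nat \<Rightarrow> cmat \<Rightarrow> cmat \<Rightarrow> cmat" where
  "mat_dsum s A A' = (\<lambda>i j. if i < s \<and> j < s then A i j
                               else if s \<le> i \<and> s \<le> j then A' (i - s) (j - s) else 0)"

definition tup_sim :: "nat \<Rightarrow> nat \<Rightarrow> cmat \<Rightarrow> ctup \<Rightarrow> cmat \<Rightarrow> ctup" where
  "tup_sim d s S X T = (\<lambda>k. if k < d then mprod s (mprod s S (X k)) T else (\<lambda>i j. 0))"

text \<open>NC function on Omega (direct-sum closed, graded, respects direct sums and
  joint similarities). Matrix identities are required on the relevant index range.\<close>
definition nc_function :: "nat \<Rightarrow> (nat \<times> ctup) set \<Rightarrow> (nat \<Rightarrow> ctup \<Rightarrow> cmat) \<Rightarrow> bool" where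
  "nc_function d \<Omega> f \<longleftrightarrow>
     (\<forall>s X t X'. (s, X) \<in> \<Omega> \<longrightarrow> (t, X') \<in> \<Omega> \<longrightarrow> (s + t, tup_dsum s X X') \<in> \<Omega>) \<and>
     (\<forall>s X t X'. (s, X) \<in> \<Omega> \<longrightarrow> (t, X') \<in> \<Omega> \<longrightarrow>
        (\<forall>i<s+t. \<forall>j<s+t. f (s + t) (tup_dsum s X X') i j = mat_dsum s (f s X) (f t X') i j)) \<and>
     (\<forall>s X S T. (s, X) \<in> \<Omega> \<longrightarrow> wf_mat s S \<longrightarrow> wf_mat s T \<longrightarrow>
        mprod s S T = idm s \<longrightarrow> mprod s T S = idm s \<longrightarrow> (s, tup_sim d s S X T) \<in> \<Omega> \<longrightarrow>
        (\<forall>i<s. \<forall>j<s. f s (tup_sim d s S X T) i j = mprod s (mprod s S (f s X)) T i j))"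

definition uniformly_open :: "nat \<Rightarrow> (nat \<times> ctup) set \<Rightarrow> bool" where
  "uniformly_open d \<Omega> \<longleftrightarrow> openin (uniform_top d) \<Omega>"

definition uniformly_analytic :: "nat \<Rightarrow> (nat \<times> ctup) set \<Rightarrow> (nat \<Rightarrow> ctup \<Rightarrow> cmat) \<Rightarrow> bool" where
  "uniformly_analytic d \<Omega> f \<longleftrightarrow> nc_function d \<Omega> f \<and> uniformly_open d \<Omega> \<and>
     (\<forall>p\<in>\<Omega>. \<exists>U B. openin (uniform_top d) U \<and> p \<in> U \<and>
        (\<forall>s X. (s, X) \<in> U \<inter> \<Omega> \<longrightarrow> op_norm s (f s X) \<le> B))"

definition words :: "nat \<Rightarrow> nat \<Rightarrow> nat list set" where
  "words N l = {xs. length xs = l \<and> set xs \<subseteq> {..<N}}"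

text \<open>E_{a0,b0} G_1 E_{a1,b1} ... G_l E_{al,bl} (n x n matrices).\<close>
fun emon :: "nat \<Rightarrow> nat list \<Rightarrow> nat list \<Rightarrow> cmat list \<Rightarrow> cmat" where
  "emon n (a # \<alpha>) (b # \<beta>) Gs = (case Gs of [] \<Rightarrow> unitm a b
      | G # Gs' \<Rightarrow> mprod n (mprod n (unitm a b) G) (emon n \<alpha> \<beta> Gs'))"
| "emon n _ _ _ = (\<lambda>i j. 0)"

text \<open>The multilinear map f_omega determined by the coefficients fhat(alpha,beta,omega).\<close>
definition coeff_map :: "nat \<Rightarrow> (nat list \<Rightarrow> nat list \<Rightarrow> nat list \<Rightarrow> complex) \<Rightarrow> nat list
                          \<Rightarrow> cmat list \<Rightarrow> cmat" where
  "coeff_map n fhat \<omega> Gs = (\<lambda>i j. \<Sum>\<alpha>\<in>words n (length Gs + 1). \<Sum>\<beta>\<in>words n (length Gs + 1).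
        fhat \<alpha> \<beta> \<omega> * emon n \<alpha> \<beta> Gs i j)"

definition blk :: "nat \<Rightarrow> ctup \<Rightarrow> nat \<Rightarrow> nat \<Rightarrow> nat \<Rightarrow> cmat" where
  "blk n H k p q = (\<lambda>i j. if i < n \<and> j < n then H k (p * n + i) (q * n + j) else 0)"

text \<open>Degree-l part of the Taylor--Taylor series at Y (level n), evaluated at X of
  level m n, entry (P,Q): the sum over |omega| = l of f_omega applied blockwise to the
  Haagerup product (X - I_m \<otimes> Y)^{\<odot> omega}.\<close>
definition tt_term :: "nat \<Rightarrow> nat \<Rightarrow> (nat list \<Rightarrow> nat list \<Rightarrow> nat list \<Rightarrow> complex) \<Rightarrow> ctup
                        \<Rightarrow> nat \<Rightarrow> ctup \<Rightarrow> nat \<Rightarrow> nat \<Rightarrow> nat \<Rightarrow> complex" where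
  "tt_term d n fhat Y m X l P Q =
     (let H = tup_diff X (kron_id d m n Y) in
      \<Sum>\<omega>\<in>words d l. \<Sum>ps\<in>{ps\<in>words m (l + 1). ps ! 0 = P div n \<and> ps ! l = Q div n}.
        coeff_map n fhat \<omega> (map (\<lambda>t. blk n H (\<omega> ! t) (ps ! t) (ps ! (t + 1))) [0..<l])
          (P mod n) (Q mod n))"

definition fps_radius :: "'v set \<Rightarrow> ('v list \<Rightarrow> complex) \<Rightarrow> ereal" where
  "fps_radius V g = inverse (limsup (\<lambda>l. ereal
      ((\<Sum>\<nu>\<in>{\<nu>. length \<nu> = l \<and> set \<nu> \<subseteq> V}. (cmod (g \<nu>))\<^sup>2) powr (1 / (2 * real l)))))"

text \<open>The series f_{a,b} in the variables z_{i,j,k} (triples (i,j,k)).\<close>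
definition fab :: "(nat list \<Rightarrow> nat list \<Rightarrow> nat list \<Rightarrow> complex) \<Rightarrow> nat \<Rightarrow> nat
                     \<Rightarrow> (nat \<times> nat \<times> nat) list \<Rightarrow> complex" where
  "fab fhat a b \<nu> = fhat (map fst \<nu> @ [a]) (map (fst \<circ> snd) \<nu> @ [b]) (map (snd \<circ> snd) \<nu>)"

end

(*
  Fix a word nu = (a_0,b_0,w_1) ... (a_(l-1),b_(l-1),w_l) in the variables z_(i,j,k) and
  evaluate the Taylor-Taylor series at the level-(l+1)n point X = I_(l+1) (x) Y + delta Z,
  where Z is the nilpotent block shift whose w_(p+1)-th matrix carries the matrix unit
  E_(b_p, a_(p+1)) (with a_l = a) in block (p, p+1).  A Haagerup product of blocks of Z
  vanishes unless it climbs the superdiagonal through exactly these units, so the entry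
  (a_0, b) of block (0, l) of the series is the single term delta^l fhat_(alpha a, beta b; omega).
  As the column norm of delta Z is at most delta, local boundedness of f near Y in the uniform
  topology bounds this entry, which gives the Cauchy estimate |coefficient| <= B / delta^l,
  hence 1 / R_(a,b) <= sqrt (d n^2) max 1 B / delta.
*)
theory Submission
  imports Defs
begin

section \<open>Column norms\<close>

definition img_norm2 :: "nat \<Rightarrow> nat \<Rightarrow> ctup \<Rightarrow> (nat \<Rightarrow> complex) \<Rightarrow> real" where
  "img_norm2 d s A v = (\<Sum>k<d. \<Sum>i<s. (cmod (\<Sum>j<s. A k i j * v j))\<^sup>2)"

definition vec_norm2 :: "nat \<Rightarrow> (nat \<Rightarrow> complex) \<Rightarrow> real" where
  "vec_norm2 s v = (\<Sum>j<s. (cmod (v j))\<^sup>2)"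

lemma col_norm_eq_Sup:
  "col_norm d s A = Sup {sqrt (img_norm2 d s A v) | v. vec_norm2 s v \<le> 1}"
  unfolding col_norm_def img_norm2_def vec_norm2_def ..

lemma img_norm2_nonneg: "0 \<le> img_norm2 d s A v"
  unfolding img_norm2_def by (intro sum_nonneg) auto

lemma vec_norm2_nonneg: "0 \<le> vec_norm2 s v"
  unfolding vec_norm2_def by (intro sum_nonneg) auto

lemma entry_le_one_if_vec_norm2_le_one:
  assumes "vec_norm2 s v \<le> 1" "j < s"
  shows "cmod (v j) \<le> 1"
proof -
  have "(cmod (v j))\<^sup>2 \<le> vec_norm2 s v"
    unfolding vec_norm2_def using assms(2) by (intro member_le_sum) auto
  with assms(1) have "(cmod (v j))\<^sup>2 \<le> 1"
    by linarith
  then show ?thesis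
    by (simp add: power_le_one_iff abs_le_square_iff[symmetric])
qed

lemma col_norm_set_bdd_above: "bdd_above {sqrt (img_norm2 d s A v) | v. vec_norm2 s v \<le> 1}"
proof -
  let ?M = "\<Sum>k<d. \<Sum>i<s. (\<Sum>j<s. cmod (A k i j))\<^sup>2"
  have "img_norm2 d s A v \<le> ?M" if v: "vec_norm2 s v \<le> 1" for v
  proof -
    have "cmod (\<Sum>j<s. A k i j * v j) \<le> (\<Sum>j<s. cmod (A k i j))" for k i
    proof -
      have "cmod (\<Sum>j<s. A k i j * v j) \<le> (\<Sum>j<s. cmod (A k i j * v j))"
        by (rule norm_sum)
      also have "\<dots> \<le> (\<Sum>j<s. cmod (A k i j))"
        using entry_le_one_if_vec_norm2_le_one[OF v]
        by (intro sum_mono) (auto simp: norm_mult intro: mult_left_le)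
      finally show ?thesis .
    qed
    then show ?thesis
      unfolding img_norm2_def by (intro sum_mono power_mono) auto
  qed
  then show ?thesis
    by (intro bdd_aboveI[where M = "sqrt ?M"]) auto
qed

lemma col_norm_upper: "vec_norm2 s v \<le> 1 \<Longrightarrow> sqrt (img_norm2 d s A v) \<le> col_norm d s A"
  unfolding col_norm_eq_Sup by (rule cSup_upper[OF _ col_norm_set_bdd_above]) auto

lemma col_norm_least:
  "(\<And>v. vec_norm2 s v \<le> 1 \<Longrightarrow> sqrt (img_norm2 d s A v) \<le> c) \<Longrightarrow> col_norm d s A \<le> c"
  unfolding col_norm_eq_Sup
  by (rule cSup_least) (auto intro: exI[of _ "\<lambda>_. 0"] simp: vec_norm2_def)

lemma col_norm_nonneg: "0 \<le> col_norm d s A"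
  using col_norm_upper[of s "\<lambda>_. 0" d A] by (simp add: img_norm2_def vec_norm2_def)

lemma img_norm2_scale: "img_norm2 d s A (\<lambda>j. c * v j) = (cmod c)\<^sup>2 * img_norm2 d s A v"
proof -
  have "(\<Sum>j<s. A k i j * (c * v j)) = c * (\<Sum>j<s. A k i j * v j)" for k i
    by (simp add: sum_distrib_left algebra_simps)
  then have "(cmod (\<Sum>j<s. A k i j * (c * v j)))\<^sup>2 = (cmod c)\<^sup>2 * (cmod (\<Sum>j<s. A k i j * v j))\<^sup>2"
    for k i by (simp add: norm_mult power_mult_distrib)
  then show ?thesis
    unfolding img_norm2_def by (simp add: sum_distrib_left)
qed

lemma vec_norm2_scale: "vec_norm2 s (\<lambda>j. c * v j) = (cmod c)\<^sup>2 * vec_norm2 s v"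
  unfolding vec_norm2_def by (simp add: norm_mult power_mult_distrib sum_distrib_left)

lemma img_norm2_le: "img_norm2 d s A v \<le> (col_norm d s A)\<^sup>2 * vec_norm2 s v"
proof (cases "vec_norm2 s v = 0")
  case True
  then have "\<forall>j<s. v j = 0"
    unfolding vec_norm2_def by (subst (asm) sum_nonneg_eq_0_iff) auto
  then show ?thesis
    using True by (simp add: img_norm2_def)
next
  case False
  then have pos: "vec_norm2 s v > 0"
    using vec_norm2_nonneg[of s v] by linarith
  define c where "c = complex_of_real (1 / sqrt (vec_norm2 s v))"
  have c2: "(cmod c)\<^sup>2 = 1 / vec_norm2 s v"
    using pos unfolding c_def by (simp add: norm_divide power_divide power2_abs less_imp_le)
  have "vec_norm2 s (\<lambda>j. c * v j) = 1"
    using pos by (simp add: vec_norm2_scale c2)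
  then have "sqrt (img_norm2 d s A (\<lambda>j. c * v j)) \<le> col_norm d s A"
    by (intro col_norm_upper) simp
  then have "img_norm2 d s A (\<lambda>j. c * v j) \<le> (col_norm d s A)\<^sup>2"
    using img_norm2_nonneg by (metis real_le_rsqrt real_sqrt_le_iff sqrt_le_D)
  then have "img_norm2 d s A v / vec_norm2 s v \<le> (col_norm d s A)\<^sup>2"
    by (simp add: img_norm2_scale c2)
  then show ?thesis
    using pos by (simp add: divide_le_eq mult.commute)
qed

lemma sqrt_double_sum_sq_triangle:
  fixes x y :: "nat \<Rightarrow> nat \<Rightarrow> complex"
  shows "sqrt (\<Sum>k<d. \<Sum>i<s. (cmod (x k i + y k i))\<^sup>2)
     \<le> sqrt (\<Sum>k<d. \<Sum>i<s. (cmod (x k i))\<^sup>2) + sqrt (\<Sum>k<d. \<Sum>i<s. (cmod (y k i))\<^sup>2)"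
proof -
  let ?S = "{..<d} \<times> {..<s}"
  have L2: "sqrt (\<Sum>k<d. \<Sum>i<s. (g k i)\<^sup>2) = L2_set (\<lambda>p. g (fst p) (snd p)) ?S"
    for g :: "nat \<Rightarrow> nat \<Rightarrow> real"
    unfolding L2_set_def by (simp add: sum.cartesian_product case_prod_beta)
  have "L2_set (\<lambda>p. cmod (x (fst p) (snd p) + y (fst p) (snd p))) ?S
     \<le> L2_set (\<lambda>p. cmod (x (fst p) (snd p)) + cmod (y (fst p) (snd p))) ?S"
    by (rule L2_set_mono) (auto intro: norm_triangle_ineq)
  also have "\<dots> \<le> L2_set (\<lambda>p. cmod (x (fst p) (snd p))) ?S + L2_set (\<lambda>p. cmod (y (fst p) (snd p))) ?S"
    by (rule L2_set_triangle_ineq)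
  finally show ?thesis
    unfolding L2 .
qed

lemma col_norm_add:
  "col_norm d s (\<lambda>k i j. A k i j + B k i j) \<le> col_norm d s A + col_norm d s B"
proof (rule col_norm_least)
  fix v assume v: "vec_norm2 s v \<le> 1"
  have "(\<Sum>j<s. (A k i j + B k i j) * v j) = (\<Sum>j<s. A k i j * v j) + (\<Sum>j<s. B k i j * v j)"
    for k i by (simp add: distrib_right sum.distrib)
  then have "sqrt (img_norm2 d s (\<lambda>k i j. A k i j + B k i j) v)
      \<le> sqrt (img_norm2 d s A v) + sqrt (img_norm2 d s B v)"
    unfolding img_norm2_def by (simp add: sqrt_double_sum_sq_triangle)
  also have "\<dots> \<le> col_norm d s A + col_norm d s B"
    using col_norm_upper[OF v] by (intro add_mono)
  finally show "sqrt (img_norm2 d s (\<lambda>k i j. A k i j + B k i j) v) \<le> col_norm d s A + col_norm d s B" .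
qed

lemma sum_lessThan_mult_blocks:
  fixes g :: "nat \<Rightarrow> 'a::comm_monoid_add"
  shows "(\<Sum>i<k * n. g i) = (\<Sum>p<k. \<Sum>i<n. g (p * n + i))"
proof -
  have "(\<Sum>i\<in>{p * n..<p * n + n}. g i) = (\<Sum>i<n. g (p * n + i))" for p
    using sum.shift_bounds_nat_ivl[of g 0 "p * n" n] by (simp add: atLeast0LessThan add.commute)
  then show ?thesis
    using sum.nat_group[of g n k] by simp
qed

lemma block_index_less: "p < k \<Longrightarrow> i < n \<Longrightarrow> p * n + i < k * (n::nat)"
proof -
  assume "p < k" "i < n"
  then have "p * n + i < Suc p * n"
    by simp
  also have "\<dots> \<le> k * n"
    using \<open>p < k\<close> by (intro mult_right_mono) auto
  finally show ?thesis .
qed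

lemma col_norm_kron_id_le: "col_norm d (k * n) (kron_id d k n A) \<le> col_norm d n A"
proof (rule col_norm_least)
  fix v assume v: "vec_norm2 (k * n) v \<le> 1"
  define c where "c = col_norm d n A"
  define w where "w p = (\<lambda>j. v (p * n + j))" for p
  have row: "(\<Sum>J<k * n. kron_id d k n A a (p * n + i) J * v J) = (\<Sum>j<n. A a i j * w p j)"
    if "a < d" "p < k" "i < n" for a p i
  proof -
    have "(\<Sum>J<k * n. kron_id d k n A a (p * n + i) J * v J)
        = (\<Sum>q<k. \<Sum>j<n. kron_id d k n A a (p * n + i) (q * n + j) * v (q * n + j))"
      by (rule sum_lessThan_mult_blocks)
    also have "\<dots> = (\<Sum>q<k. if q = p then (\<Sum>j<n. A a i j * w p j) else 0)"
      using that block_index_less[OF that(2,3)]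
      by (intro sum.cong refl) (auto simp: kron_id_def w_def block_index_less intro!: sum.cong)
    finally show ?thesis
      using that by simp
  qed
  have "img_norm2 d (k * n) (kron_id d k n A) v = (\<Sum>p<k. img_norm2 d n A (w p))"
    unfolding img_norm2_def
    by (subst sum_lessThan_mult_blocks) (simp add: row sum.swap[of _ "{..<d}"])
  also have "\<dots> \<le> (\<Sum>p<k. c\<^sup>2 * vec_norm2 n (w p))"
    unfolding c_def by (intro sum_mono img_norm2_le)
  also have "\<dots> = c\<^sup>2 * vec_norm2 (k * n) v"
    unfolding vec_norm2_def w_def by (simp add: sum_lessThan_mult_blocks sum_distrib_left)
  also have "\<dots> \<le> c\<^sup>2"
    using v by (simp add: mult_left_le)
  finally show "sqrt (img_norm2 d (k * n) (kron_id d k n A) v) \<le> col_norm d n A"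
    using col_norm_nonneg[of d n A] unfolding c_def by (simp add: real_le_lsqrt)
qed

lemma op_norm_eq_col_norm: "op_norm s A = col_norm 1 s (\<lambda>_. A)"
  unfolding op_norm_def col_norm_def by simp

lemma entry_le_op_norm:
  assumes "P < s" "Q < s"
  shows "cmod (A P Q) \<le> op_norm s A"
proof -
  define v where "v = (\<lambda>j. if j = Q then (1::complex) else 0)"
  have "vec_norm2 s v = (\<Sum>j<s. if j = Q then 1 else 0)"
    unfolding vec_norm2_def v_def by (intro sum.cong refl) auto
  also have "\<dots> = 1"
    using assms by simp
  finally have le: "sqrt (img_norm2 1 s (\<lambda>_. A) v) \<le> op_norm s A"
    unfolding op_norm_eq_col_norm by (intro col_norm_upper) simp
  have "(\<Sum>j<s. A i j * v j) = A i Q" for i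
    using assms unfolding v_def by (simp add: if_distrib cong: if_cong)
  then have "img_norm2 1 s (\<lambda>_. A) v = (\<Sum>i<s. (cmod (A i Q))\<^sup>2)"
    unfolding img_norm2_def by simp
  moreover have "(cmod (A P Q))\<^sup>2 \<le> (\<Sum>i<s. (cmod (A i Q))\<^sup>2)"
    using assms by (intro member_le_sum) auto
  ultimately have "cmod (A P Q) \<le> sqrt (img_norm2 1 s (\<lambda>_. A) v)"
    by (simp add: real_le_rsqrt)
  with le show ?thesis
    by linarith
qed

lemma img_norm2_scale_tup:
  "img_norm2 d s (\<lambda>k i j. c * A k i j) v = (cmod c)\<^sup>2 * img_norm2 d s A v"
proof -
  have "img_norm2 d s (\<lambda>k i j. c * A k i j) v = img_norm2 d s A (\<lambda>j. c * v j)"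
    unfolding img_norm2_def by (simp add: algebra_simps)
  then show ?thesis
    by (simp add: img_norm2_scale)
qed

section \<open>Neighbourhoods in the uniform topology\<close>

lemma kron_id_kron_id: "kron_id d k (m * t) (kron_id d m t Z) = kron_id d (k * m) t Z"
proof (intro ext)
  fix a i j
  show "kron_id d k (m * t) (kron_id d m t Z) a i j = kron_id d (k * m) t Z a i j"
  proof (cases "0 < m * t")
    case True
    then have t: "0 < t" by simp
    have mod_div: "x mod (m * t) div t = x div t mod m" for x
      using mod_mult2_eq[of x t m] t by (simp add: mult.commute)
    have div_div: "x div (m * t) = x div t div m" for x
      by (metis div_mult2_eq mult.commute)
    have same_block: "(i div t = j div t) \<longleftrightarrow>
        (i div (m * t) = j div (m * t) \<and> i mod (m * t) div t = j mod (m * t) div t)"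
      unfolding mod_div div_div by (metis div_mult_mod_eq)
    show ?thesis
      using True same_block unfolding kron_id_def
      by (auto simp: mod_mod_cancel mult.assoc)
  qed (auto simp: kron_id_def)
qed

lemma kron_id_tup_diff:
  "kron_id d k n (tup_diff A B) = tup_diff (kron_id d k n A) (kron_id d k n B)"
  unfolding kron_id_def tup_diff_def by (intro ext) simp

lemma uball_mono: "r \<le> r' \<Longrightarrow> uball d n Y r \<subseteq> uball d n Y r'"
  unfolding uball_def by fastforce

lemma uball_subset_basic_set:
  assumes Y: "(n, Y) \<in> uball d t Z r"
  obtains e where "e > 0" "uball d n Y e \<subseteq> uball d t Z r"
proof -
  obtain m where m: "m \<ge> 1" "n = m * t" and
    c: "col_norm d n (tup_diff Y (kron_id d m t Z)) < r"
    using Y unfolding uball_def by auto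
  define e where "e = r - col_norm d n (tup_diff Y (kron_id d m t Z))"
  have "uball d n Y e \<subseteq> uball d t Z r"
  proof
    fix p assume "p \<in> uball d n Y e"
    then obtain X k where p: "p = (k * n, X)" "k \<ge> 1" "wf_tup d (k * n) X"
      and X: "col_norm d (k * n) (tup_diff X (kron_id d k n Y)) < e"
      unfolding uball_def by auto
    have "tup_diff X (kron_id d (k * m) t Z)
        = (\<lambda>a i j. tup_diff X (kron_id d k n Y) a i j
                  + kron_id d k n (tup_diff Y (kron_id d m t Z)) a i j)"
      unfolding kron_id_tup_diff m(2) kron_id_kron_id by (simp add: tup_diff_def)
    then have "col_norm d (k * n) (tup_diff X (kron_id d (k * m) t Z))
        \<le> col_norm d (k * n) (tup_diff X (kron_id d k n Y))
          + col_norm d (k * n) (kron_id d k n (tup_diff Y (kron_id d m t Z)))"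
      by (simp add: col_norm_add)
    also have "\<dots> < r"
      using X col_norm_kron_id_le[of d k n "tup_diff Y (kron_id d m t Z)"]
      unfolding e_def by linarith
    finally show "p \<in> uball d t Z r"
      using p m unfolding uball_def by (auto intro!: exI[of _ "k * m"])
  qed
  moreover have "e > 0"
    using c unfolding e_def by simp
  ultimately show ?thesis
    using that by blast
qed

lemma open_uniform_top_contains_uball:
  assumes "openin (uniform_top d) U" "(n, Y) \<in> U"
  obtains e where "e > 0" "uball d n Y e \<subseteq> U"
proof -
  have "generate_topology_on {uball d t Z r | t Z r. 1 \<le> t \<and> wf_tup d t Z \<and> 0 < r} U"
    using assms(1) unfolding uniform_top_def openin_topology_generated_by_iff .
  then have "\<exists>e>0. uball d n Y e \<subseteq> U"
    using assms(2)
  proof (induction rule: generate_topology_on.induct)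
    case (Int A B)
    then obtain e1 e2 where "e1 > 0" "uball d n Y e1 \<subseteq> A" "e2 > 0" "uball d n Y e2 \<subseteq> B"
      by auto
    moreover have "uball d n Y (min e1 e2) \<subseteq> uball d n Y e1 \<inter> uball d n Y e2"
      using uball_mono[of "min e1 e2" e1 d n Y] uball_mono[of "min e1 e2" e2 d n Y] by auto
    ultimately show ?case
      by (intro exI[of _ "min e1 e2"]) auto
  next
    case (UN K)
    then show ?case
      by blast
  next
    case (Basis S)
    then obtain t Z r where "S = uball d t Z r"
      by blast
    then show ?case
      using Basis.prems uball_subset_basic_set by metis
  qed simp
  with that show ?thesis
    by blast
qed

lemma uniformly_analytic_bounded_on_uball:
  assumes "uniformly_analytic d \<Omega> f" "(n, Y) \<in> \<Omega>"
  obtains e B where "e > 0" "\<And>s X. (s, X) \<in> uball d n Y e \<Longrightarrow> (s, X) \<in> \<Omega> \<Longrightarrow> op_norm s (f s X) \<le> B"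
proof -
  obtain U B where U: "openin (uniform_top d) U" "(n, Y) \<in> U"
    and "\<And>s X. (s, X) \<in> U \<inter> \<Omega> \<Longrightarrow> op_norm s (f s X) \<le> B"
    using assms unfolding uniformly_analytic_def by blast
  moreover obtain e where "e > 0" "uball d n Y e \<subseteq> U"
    using open_uniform_top_contains_uball[OF U] .
  ultimately show ?thesis
    using that by blast
qed

section \<open>Coefficient maps at matrix units\<close>

lemma emon_eq_zero_if_zero_factor:
  assumes "(\<lambda>i j. 0) \<in> set Gs"
  shows "emon n \<alpha> \<beta> Gs = (\<lambda>i j. 0)"
  using assms
proof (induction \<alpha> arbitrary: \<beta> Gs)
  case (Cons a \<alpha>)
  show ?case
  proof (cases \<beta>)
    case (Cons b \<beta>')
    obtain G Gs' where G: "Gs = G # Gs'"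
      using Cons.prems by (cases Gs) auto
    show ?thesis
    proof (cases "G = (\<lambda>i j. 0)")
      case False
      then have "emon n \<alpha> \<beta>' Gs' = (\<lambda>i j. 0)"
        using Cons.prems G by (intro Cons.IH) auto
      then show ?thesis
        unfolding Cons G by (simp add: mprod_def fun_eq_iff)
    qed (simp add: Cons G mprod_def fun_eq_iff)
  qed simp
qed simp

lemma coeff_map_eq_zero_if_zero_factor:
  "(\<lambda>i j. 0) \<in> set Gs \<Longrightarrow> coeff_map n fhat \<omega> Gs i j = 0"
  unfolding coeff_map_def by (simp add: emon_eq_zero_if_zero_factor)

lemma finite_words: "finite (words N l)"
  unfolding words_def using finite_lists_length_eq[of "{..<N}" l] by (simp add: conj_commute)

lemma emon_unit_factors:
  assumes "length Gs = length xs" "length ys = length xs"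
    and "\<And>s. s < length xs \<Longrightarrow> Gs ! s = (\<lambda>i j. c * unitm (xs ! s) (ys ! s) i j)"
    and "set xs \<subseteq> {..<n}" "set ys \<subseteq> {..<n}" "i < n" "j < n"
    and "length \<alpha> = length xs + 1" "length \<beta> = length xs + 1"
  shows "emon n \<alpha> \<beta> Gs i j = (if \<alpha> = i # ys \<and> \<beta> = xs @ [j] then c ^ length xs else 0)"
  using assms
proof (induction xs arbitrary: Gs ys \<alpha> \<beta> i)
  case Nil
  then obtain a b where "\<alpha> = [a]" "\<beta> = [b]" "Gs = []" "ys = []"
    by (metis One_nat_def length_0_conv length_Suc_conv list.size(3) add_0)
  then show ?case
    by (auto simp: unitm_def)
next
  case (Cons x xs)
  obtain a \<alpha>' where \<alpha>: "\<alpha> = a # \<alpha>'"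
    using Cons.prems(8) by (cases \<alpha>) auto
  obtain b \<beta>' where \<beta>: "\<beta> = b # \<beta>'"
    using Cons.prems(9) by (cases \<beta>) auto
  obtain y ys' where ys: "ys = y # ys'"
    using Cons.prems(2) by (cases ys) auto
  obtain G Gs' where Gs: "Gs = G # Gs'"
    using Cons.prems(1) by (cases Gs) auto
  have G: "G = (\<lambda>i j. c * unitm x y i j)"
    using Cons.prems(3)[of 0] Gs ys by simp
  have xy: "x < n" "y < n"
    using Cons.prems(4,5) ys by auto
  have IH: "emon n \<alpha>' \<beta>' Gs' y j = (if \<alpha>' = y # ys' \<and> \<beta>' = xs @ [j] then c ^ length xs else 0)"
    using Cons.prems(1-9) Cons.prems(3)[of "Suc _"] Gs ys \<alpha> \<beta> xy
    by (intro Cons.IH) auto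
  have first: "mprod n (unitm a b) G i l = (if i = a \<and> b = x \<and> l = y then c else 0)"
    if "l < n" for l
  proof -
    have "mprod n (unitm a b) G i l
        = (\<Sum>l'<n. (if i = a \<and> l' = b then 1 else 0) * (c * (if l' = x \<and> l = y then 1 else 0)))"
      using that Cons.prems(6) by (simp add: mprod_def G unitm_def)
    also have "\<dots> = (\<Sum>l'<n. if l' = b then (if i = a \<and> b = x \<and> l = y then c else 0) else 0)"
      by (intro sum.cong) auto
    also have "\<dots> = (if i = a \<and> b = x \<and> l = y then c else 0)"
      using xy by auto
    finally show ?thesis .
  qed
  have "emon n \<alpha> \<beta> Gs i j = (\<Sum>l<n. mprod n (unitm a b) G i l * emon n \<alpha>' \<beta>' Gs' l j)"
    unfolding \<alpha> \<beta> Gs using Cons.prems(6,7) by (simp add: mprod_def)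
  also have "\<dots> = (\<Sum>l<n. if l = y then (if i = a \<and> b = x then c * emon n \<alpha>' \<beta>' Gs' y j else 0) else 0)"
    using first by (intro sum.cong) auto
  also have "\<dots> = (if \<alpha> = i # ys \<and> \<beta> = (x # xs) @ [j] then c ^ length (x # xs) else 0)"
    using xy IH \<alpha> \<beta> ys by auto
  finally show ?case .
qed

lemma coeff_map_unit_factors:
  assumes "length Gs = length xs" "length ys = length xs"
    and "\<And>s. s < length xs \<Longrightarrow> Gs ! s = (\<lambda>i j. c * unitm (xs ! s) (ys ! s) i j)"
    and "set xs \<subseteq> {..<n}" "set ys \<subseteq> {..<n}" "i < n" "j < n"
  shows "coeff_map n fhat \<omega> Gs i j = c ^ length xs * fhat (i # ys) (xs @ [j]) \<omega>"
proof -
  let ?W = "words n (length xs + 1)"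
  have W: "i # ys \<in> ?W" "xs @ [j] \<in> ?W"
    using assms unfolding words_def by auto
  have "coeff_map n fhat \<omega> Gs i j
      = (\<Sum>\<alpha>\<in>?W. \<Sum>\<beta>\<in>?W. fhat \<alpha> \<beta> \<omega> * (if \<alpha> = i # ys \<and> \<beta> = xs @ [j] then c ^ length xs else 0))"
    unfolding coeff_map_def assms(1)
    by (intro sum.cong refl) (auto simp: emon_unit_factors[OF assms] words_def)
  also have "\<dots> = (\<Sum>\<alpha>\<in>?W. if \<alpha> = i # ys then fhat \<alpha> (xs @ [j]) \<omega> * c ^ length xs else 0)"
  proof (intro sum.cong refl)
    fix \<alpha>
    show "(\<Sum>\<beta>\<in>?W. fhat \<alpha> \<beta> \<omega> * (if \<alpha> = i # ys \<and> \<beta> = xs @ [j] then c ^ length xs else 0))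
        = (if \<alpha> = i # ys then fhat \<alpha> (xs @ [j]) \<omega> * c ^ length xs else 0)"
      using W by (cases "\<alpha> = i # ys") (simp_all add: finite_words if_distrib[of "\<lambda>x. _ * x"] cong: if_cong)
  qed
  also have "\<dots> = c ^ length xs * fhat (i # ys) (xs @ [j]) \<omega>"
    using W by (simp add: finite_words mult.commute)
  finally show ?thesis .
qed

section \<open>The shift test point and the Cauchy estimate\<close>

definition tt_expansion_on ::
    "nat \<Rightarrow> nat \<Rightarrow> (nat list \<Rightarrow> nat list \<Rightarrow> nat list \<Rightarrow> complex) \<Rightarrow> ctup \<Rightarrow> (nat \<times> ctup) set
      \<Rightarrow> (nat \<Rightarrow> ctup \<Rightarrow> cmat) \<Rightarrow> real \<Rightarrow> bool" where
  "tt_expansion_on d n fhat Y \<Omega> f r \<longleftrightarrow>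
     (\<forall>m X. 1 \<le> m \<longrightarrow> wf_tup d (m * n) X \<longrightarrow>
        col_norm d (m * n) (tup_diff X (kron_id d m n Y)) < r \<longrightarrow>
        (m * n, X) \<in> \<Omega> \<and>
        (\<forall>P < m * n. \<forall>Q < m * n. (\<lambda>l. tt_term d n fhat Y m X l P Q) sums f (m * n) X P Q))"

text \<open>A nilpotent test point of level (length ks + 1) n: in the ks!p-th matrix, the block
  (p, p + 1) is the matrix unit E_{xs!p, ys!p}, and all other blocks vanish.\<close>
definition shift_tup :: "nat \<Rightarrow> nat \<Rightarrow> nat list \<Rightarrow> nat list \<Rightarrow> nat list \<Rightarrow> ctup" where
  "shift_tup d n ks xs ys = (\<lambda>k I J.
     if k < d \<and> I < Suc (length ks) * n \<and> J < Suc (length ks) * n \<and>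
        I div n < length ks \<and> J div n = Suc (I div n) \<and> k = ks ! (I div n) \<and>
        I mod n = xs ! (I div n) \<and> J mod n = ys ! (I div n)
     then 1 else 0)"

context
  fixes d n :: nat and ks xs ys :: "nat list"
  assumes lengths: "length xs = length ks" "length ys = length ks"
    and letters: "set ks \<subseteq> {..<d}" "set xs \<subseteq> {..<n}" "set ys \<subseteq> {..<n}"
begin

lemma shift_tup_letters_less:
  assumes "p < length ks"
  shows "ks ! p < d \<and> xs ! p < n \<and> ys ! p < n"
proof -
  have "ks ! p \<in> set ks" "xs ! p \<in> set xs" "ys ! p \<in> set ys"
    using assms lengths by simp_all
  then show ?thesis
    using letters by auto
qed

lemma blk_scaled_shift_tup:
  assumes "p < Suc (length ks)" "q < Suc (length ks)"
  shows "blk n (\<lambda>k I J. c * shift_tup d n ks xs ys k I J) k p q =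
    (if p < length ks \<and> q = Suc p \<and> k = ks ! p
     then (\<lambda>i j. c * unitm (xs ! p) (ys ! p) i j) else (\<lambda>i j. 0))"
proof (intro ext)
  fix i j
  show "blk n (\<lambda>k I J. c * shift_tup d n ks xs ys k I J) k p q i j =
    (if p < length ks \<and> q = Suc p \<and> k = ks ! p
     then (\<lambda>i j. c * unitm (xs ! p) (ys ! p) i j) else (\<lambda>i j. 0)) i j"
  proof (cases "i < n \<and> j < n")
    case True
    have "p * n + i < Suc (length ks) * n" "q * n + j < Suc (length ks) * n"
      using True block_index_less[OF assms(1), of i n] block_index_less[OF assms(2), of j n]
      by simp_all
    then show ?thesis
      using True shift_tup_letters_less[of p]
      unfolding blk_def shift_tup_def unitm_def by auto
  next
    case False
    then show ?thesis
      using shift_tup_letters_less[of p] unfolding blk_def unitm_def by auto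
  qed
qed

lemma scaled_shift_tup_nonzero_path:
  assumes "\<omega> \<in> words d l" "ps \<in> words (Suc (length ks)) (l + 1)"
    and "ps ! 0 = 0" "ps ! l = length ks"
    and "(\<lambda>i j. 0) \<notin> set (map (\<lambda>t. blk n (\<lambda>k I J. c * shift_tup d n ks xs ys k I J)
                                   (\<omega> ! t) (ps ! t) (ps ! (t + 1))) [0..<l])"
  shows "l = length ks \<and> ps = [0..<Suc (length ks)] \<and> \<omega> = ks"
proof -
  have len: "length ps = l + 1" "length \<omega> = l"
    using assms(1,2) unfolding words_def by auto
  have bound: "ps ! s < Suc (length ks)" if "s \<le> l" for s
  proof -
    have "ps ! s \<in> set ps"
      using that len by simp
    then show ?thesis
      using assms(2) unfolding words_def by auto
  qed
  have step: "ps ! s < length ks \<and> ps ! (s + 1) = Suc (ps ! s) \<and> \<omega> ! s = ks ! (ps ! s)"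
    if "s < l" for s
  proof -
    have "blk n (\<lambda>k I J. c * shift_tup d n ks xs ys k I J) (\<omega> ! s) (ps ! s) (ps ! (s + 1))
        \<in> set (map (\<lambda>t. blk n (\<lambda>k I J. c * shift_tup d n ks xs ys k I J)
                        (\<omega> ! t) (ps ! t) (ps ! (t + 1))) [0..<l])"
      using that by auto
    then have "blk n (\<lambda>k I J. c * shift_tup d n ks xs ys k I J) (\<omega> ! s) (ps ! s) (ps ! (s + 1))
        \<noteq> (\<lambda>i j. 0)"
      using assms(5) by metis
    then show ?thesis
      using blk_scaled_shift_tup[OF bound bound, of s "s + 1" c "\<omega> ! s"] that
      by (auto split: if_splits)
  qed
  have ps: "ps ! s = s" if "s \<le> l" for s
    using that
  proof (induction s)
    case (Suc s)
    then show ?case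
      using step[of s] by simp
  qed (use assms(3) in simp)
  have l: "l = length ks"
    using ps[of l] assms(4) by simp
  have "ps = [0..<Suc (length ks)]"
    by (rule nth_equalityI) (use len l ps in \<open>auto simp del: upt_Suc simp: nth_upt\<close>)
  moreover have "\<omega> = ks"
    by (rule nth_equalityI) (use len l step ps in auto)
  ultimately show ?thesis
    using l by simp
qed

lemma tt_term_at_shift:
  assumes "i < n" "j < n"
  shows "tt_term d n fhat Y (Suc (length ks))
      (\<lambda>k I J. kron_id d (Suc (length ks)) n Y k I J + c * shift_tup d n ks xs ys k I J) l
      i (length ks * n + j)
    = (if l = length ks then c ^ length ks * fhat (i # ys) (xs @ [j]) ks else 0)"
proof -
  define H where "H = (\<lambda>k I J. c * shift_tup d n ks xs ys k I J)"
  define PS where "PS = {ps \<in> words (Suc (length ks)) (l + 1). ps ! 0 = 0 \<and> ps ! l = length ks}"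
  define F where "F \<omega> ps = coeff_map n fhat \<omega>
      (map (\<lambda>t. blk n H (\<omega> ! t) (ps ! t) (ps ! (t + 1))) [0..<l]) i j" for \<omega> ps
  have "tup_diff (\<lambda>k I J. kron_id d (Suc (length ks)) n Y k I J + H k I J)
      (kron_id d (Suc (length ks)) n Y) = H"
    unfolding tup_diff_def by simp
  moreover have "i div n = 0" "i mod n = i"
      "(length ks * n + j) div n = length ks" "(length ks * n + j) mod n = j"
    using assms by auto
  ultimately have "tt_term d n fhat Y (Suc (length ks))
      (\<lambda>k I J. kron_id d (Suc (length ks)) n Y k I J + H k I J) l i (length ks * n + j)
      = (\<Sum>\<omega>\<in>words d l. \<Sum>ps\<in>PS. F \<omega> ps)"
    unfolding tt_term_def Let_def PS_def F_def by simp
  also have "\<dots> = (if l = length ks then c ^ length ks * fhat (i # ys) (xs @ [j]) ks else 0)"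
  proof -
    have F_zero: "F \<omega> ps = 0"
      if "\<omega> \<in> words d l" "ps \<in> PS" "\<not> (l = length ks \<and> ps = [0..<Suc (length ks)] \<and> \<omega> = ks)"
      for \<omega> ps
    proof (rule ccontr)
      assume "F \<omega> ps \<noteq> 0"
      then have "(\<lambda>i j. 0) \<notin> set (map (\<lambda>t. blk n H (\<omega> ! t) (ps ! t) (ps ! (t + 1))) [0..<l])"
        unfolding F_def using coeff_map_eq_zero_if_zero_factor by metis
      then show False
        using that scaled_shift_tup_nonzero_path[of \<omega> l ps c] unfolding PS_def H_def by auto
    qed
    show ?thesis
    proof (cases "l = length ks")
      case True
      have ps: "[0..<Suc (length ks)] \<in> PS"
        unfolding PS_def words_def True by (auto simp: nth_append)
      have ks: "ks \<in> words d l"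
        unfolding words_def True using letters by simp
      have "finite PS"
        unfolding PS_def by (simp add: finite_words)
      have "(\<Sum>\<omega>\<in>words d l. \<Sum>ps\<in>PS. F \<omega> ps) = (\<Sum>\<omega>\<in>{ks}. \<Sum>ps\<in>PS. F \<omega> ps)"
        by (rule sum.mono_neutral_right) (use ks F_zero in \<open>auto intro!: sum.neutral simp: finite_words\<close>)
      also have "\<dots> = (\<Sum>ps\<in>PS. F ks ps)"
        by simp
      also have "\<dots> = (\<Sum>ps\<in>{[0..<Suc (length ks)]}. F ks ps)"
        by (rule sum.mono_neutral_right) (use \<open>finite PS\<close> ps ks F_zero in auto)
      also have "\<dots> = F ks [0..<Suc (length ks)]"
        by simp
      also have "\<dots> = c ^ length xs * fhat (i # ys) (xs @ [j]) ks"
        unfolding F_def True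
      proof (rule coeff_map_unit_factors)
        fix s assume "s < length xs"
        then show "map (\<lambda>t. blk n H (ks ! t) ([0..<Suc (length ks)] ! t)
              ([0..<Suc (length ks)] ! (t + 1))) [0..<length ks] ! s
            = (\<lambda>i j. c * unitm (xs ! s) (ys ! s) i j)"
          using lengths blk_scaled_shift_tup[of s "Suc s" c "ks ! s"]
          unfolding H_def by (simp add: nth_upt del: upt_Suc)
      qed (use lengths letters assms in auto)
      finally show ?thesis
        using True lengths by simp
    qed (simp add: F_zero)
  qed
  finally show ?thesis
    unfolding H_def .
qed

lemma shift_tup_row_apply:
  assumes "k < d" "p < Suc (length ks)" "i < n"
  shows "(\<Sum>J<Suc (length ks) * n. shift_tup d n ks xs ys k (p * n + i) J * v J)
    = (if p < length ks \<and> k = ks ! p \<and> i = xs ! p then v (Suc p * n + ys ! p) else 0)"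
proof (cases "p < length ks")
  case True
  have y: "ys ! p < n"
    using shift_tup_letters_less[OF True] by simp
  have col: "Suc p * n + ys ! p < Suc (length ks) * n"
    using block_index_less[of "Suc p" "Suc (length ks)" "ys ! p" n] True y by simp
  have "p * n + i < Suc (length ks) * n"
    using block_index_less[OF assms(2,3)] .
  moreover have "(J div n = Suc p \<and> J mod n = ys ! p) \<longleftrightarrow> J = Suc p * n + ys ! p" for J
  proof
    assume "J div n = Suc p \<and> J mod n = ys ! p"
    then show "J = Suc p * n + ys ! p"
      by (metis div_mult_mod_eq)
  qed (use y in \<open>simp del: mult_Suc\<close>)
  ultimately have "shift_tup d n ks xs ys k (p * n + i) J
      = (if k = ks ! p \<and> i = xs ! p \<and> J = Suc p * n + ys ! p then 1 else 0)"
    if "J < Suc (length ks) * n" for J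
    using assms True that col unfolding shift_tup_def by auto
  then show ?thesis
    using True col by (cases "k = ks ! p \<and> i = xs ! p") (auto simp: if_distrib[of "\<lambda>x. x * _"] cong: if_cong)
next
  case False
  then show ?thesis
    using assms unfolding shift_tup_def by simp
qed

lemma img_norm2_shift_tup:
  "img_norm2 d (Suc (length ks) * n) (shift_tup d n ks xs ys) v
    = (\<Sum>p<length ks. (cmod (v (Suc p * n + ys ! p)))\<^sup>2)"
proof -
  define w where "w p = (cmod (v (Suc p * n + ys ! p)))\<^sup>2" for p
  have "(\<Sum>I<Suc (length ks) * n. (cmod (\<Sum>J<Suc (length ks) * n. shift_tup d n ks xs ys k I J * v J))\<^sup>2)
      = (\<Sum>p<Suc (length ks). \<Sum>i<n. if p < length ks \<and> k = ks ! p \<and> i = xs ! p then w p else 0)"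
    if "k < d" for k
    unfolding sum_lessThan_mult_blocks[of "\<lambda>I. (cmod (\<Sum>J<Suc (length ks) * n. shift_tup d n ks xs ys k I J * v J))\<^sup>2"]
  proof (intro sum.cong refl)
    fix p i assume "p \<in> {..<Suc (length ks)}" "i \<in> {..<n}"
    then show "(cmod (\<Sum>J<Suc (length ks) * n. shift_tup d n ks xs ys k (p * n + i) J * v J))\<^sup>2
        = (if p < length ks \<and> k = ks ! p \<and> i = xs ! p then w p else 0)"
      using shift_tup_row_apply[OF that, of p i v] by (simp add: w_def)
  qed
  then have "img_norm2 d (Suc (length ks) * n) (shift_tup d n ks xs ys) v
      = (\<Sum>k<d. \<Sum>p<Suc (length ks). \<Sum>i<n. if p < length ks \<and> k = ks ! p \<and> i = xs ! p then w p else 0)"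
    unfolding img_norm2_def by simp
  also have "\<dots> = (\<Sum>p<Suc (length ks). \<Sum>k<d. \<Sum>i<n. if p < length ks \<and> k = ks ! p \<and> i = xs ! p then w p else 0)"
    by (rule sum.swap)
  also have "\<dots> = (\<Sum>p<Suc (length ks). if p < length ks then w p else 0)"
  proof (intro sum.cong refl)
    fix p
    have "(\<Sum>i<n. if p < length ks \<and> k = ks ! p \<and> i = xs ! p then w p else 0)
        = (if p < length ks \<and> k = ks ! p then w p else 0)" for k
      using shift_tup_letters_less[of p] by (cases "p < length ks \<and> k = ks ! p") auto
    then show "(\<Sum>k<d. \<Sum>i<n. if p < length ks \<and> k = ks ! p \<and> i = xs ! p then w p else 0)
        = (if p < length ks then w p else 0)"
      using shift_tup_letters_less[of p] by simp
  qed
  also have "\<dots> = (\<Sum>p<length ks. w p)"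
    by simp
  finally show ?thesis
    unfolding w_def .
qed

lemma img_norm2_shift_tup_le:
  "img_norm2 d (Suc (length ks) * n) (shift_tup d n ks xs ys) v \<le> vec_norm2 (Suc (length ks) * n) v"
proof -
  have "(\<Sum>p<length ks. (cmod (v (Suc p * n + ys ! p)))\<^sup>2)
      \<le> (\<Sum>p<length ks. \<Sum>j<n. (cmod (v (Suc p * n + j)))\<^sup>2)"
    using shift_tup_letters_less
    by (intro sum_mono member_le_sum[where f = "\<lambda>j. (cmod (v (Suc _ * n + j)))\<^sup>2"]) auto
  also have "\<dots> \<le> (\<Sum>q<Suc (length ks). \<Sum>j<n. (cmod (v (q * n + j)))\<^sup>2)"
    unfolding sum.lessThan_Suc_shift by (simp add: sum_nonneg)
  also have "\<dots> = vec_norm2 (Suc (length ks) * n) v"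
    unfolding vec_norm2_def by (rule sum_lessThan_mult_blocks[symmetric])
  finally show ?thesis
    unfolding img_norm2_shift_tup .
qed

lemma col_norm_scaled_shift_tup_le:
  "col_norm d (Suc (length ks) * n) (\<lambda>k I J. c * shift_tup d n ks xs ys k I J) \<le> cmod c"
proof (rule col_norm_least)
  fix v assume "vec_norm2 (Suc (length ks) * n) v \<le> 1"
  then have "img_norm2 d (Suc (length ks) * n) (\<lambda>k I J. c * shift_tup d n ks xs ys k I J) v \<le> (cmod c)\<^sup>2"
    using img_norm2_shift_tup_le[of v]
    by (simp add: img_norm2_scale_tup mult_left_le)
  then show "sqrt (img_norm2 d (Suc (length ks) * n) (\<lambda>k I J. c * shift_tup d n ks xs ys k I J) v) \<le> cmod c"
    by (simp add: real_le_lsqrt)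
qed

lemma taylor_coeff_norm_le:
  assumes series: "tt_expansion_on d n fhat Y \<Omega> f r"
    and bounded: "\<And>s X. (s, X) \<in> uball d n Y e \<Longrightarrow> (s, X) \<in> \<Omega> \<Longrightarrow> op_norm s (f s X) \<le> B"
    and \<delta>: "0 < \<delta>" "\<delta> < r" "\<delta> < e"
    and ij: "i < n" "j < n"
  shows "cmod (fhat (i # ys) (xs @ [j]) ks) \<le> B / \<delta> ^ length ks"
proof -
  define m where "m = Suc (length ks)"
  define c where "c = complex_of_real \<delta>"
  define X where "X = (\<lambda>k I J. kron_id d m n Y k I J + c * shift_tup d n ks xs ys k I J)"
  have wf: "wf_tup d (m * n) X"
    unfolding wf_tup_def X_def kron_id_def shift_tup_def m_def by auto
  have "tup_diff X (kron_id d m n Y) = (\<lambda>k I J. c * shift_tup d n ks xs ys k I J)"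
    unfolding tup_diff_def X_def by simp
  then have close: "col_norm d (m * n) (tup_diff X (kron_id d m n Y)) \<le> \<delta>"
    using col_norm_scaled_shift_tup_le[of c] \<delta>(1)
    unfolding m_def c_def by simp
  then have "col_norm d (m * n) (tup_diff X (kron_id d m n Y)) < r"
    using \<delta>(2) by linarith
  then have in_\<Omega>: "(m * n, X) \<in> \<Omega>"
    and sums: "\<forall>P < m * n. \<forall>Q < m * n. (\<lambda>l. tt_term d n fhat Y m X l P Q) sums f (m * n) X P Q"
    using series[unfolded tt_expansion_on_def, rule_format, of m X] wf unfolding m_def by simp_all
  have "(m * n, X) \<in> uball d n Y e"
    unfolding uball_def using wf close \<delta> m_def by auto
  then have B: "op_norm (m * n) (f (m * n) X) \<le> B"
    using bounded in_\<Omega> by blast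
  have P: "i < m * n" and Q: "length ks * n + j < m * n"
    unfolding m_def using ij block_index_less[of 0 "Suc (length ks)" i n]
      block_index_less[of "length ks" "Suc (length ks)" j n]
    by simp_all
  have "(\<lambda>l. tt_term d n fhat Y m X l i (length ks * n + j))
      = (\<lambda>l. if l = length ks then c ^ length ks * fhat (i # ys) (xs @ [j]) ks else 0)"
    using tt_term_at_shift[OF ij] unfolding X_def m_def by simp
  then have "(\<lambda>l. tt_term d n fhat Y m X l i (length ks * n + j))
      sums (c ^ length ks * fhat (i # ys) (xs @ [j]) ks)"
    using sums_single[of "length ks" "\<lambda>_. c ^ length ks * fhat (i # ys) (xs @ [j]) ks"] by simp
  then have "f (m * n) X i (length ks * n + j) = c ^ length ks * fhat (i # ys) (xs @ [j]) ks"
    using sums P Q sums_unique2 by blast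
  then have "\<delta> ^ length ks * cmod (fhat (i # ys) (xs @ [j]) ks) \<le> B"
    using entry_le_op_norm[OF P Q, of "f (m * n) X"] B \<delta>(1)
    unfolding c_def by (simp add: norm_mult norm_power)
  then show ?thesis
    using \<delta>(1) by (simp add: field_simps)
qed

end

lemma fab_norm_le:
  assumes series: "tt_expansion_on d n fhat Y \<Omega> f r"
    and bounded: "\<And>s X. (s, X) \<in> uball d n Y e \<Longrightarrow> (s, X) \<in> \<Omega> \<Longrightarrow> op_norm s (f s X) \<le> B"
    and \<delta>: "0 < \<delta>" "\<delta> < r" "\<delta> < e"
    and "a < n" "b < n" and \<nu>: "set \<nu> \<subseteq> {(i, j, k). i < n \<and> j < n \<and> k < d}"
  shows "cmod (fab fhat a b \<nu>) \<le> B / \<delta> ^ length \<nu>"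
proof -
  obtain i ys where iys: "map fst \<nu> @ [a] = i # ys"
    by (cases "map fst \<nu> @ [a]") auto
  have "length ys = length \<nu>"
    using arg_cong[OF iys, of length] by simp
  moreover have "set (i # ys) \<subseteq> {..<n}"
    unfolding iys[symmetric] using \<nu> \<open>a < n\<close> by auto
  moreover have "set (map (fst \<circ> snd) \<nu>) \<subseteq> {..<n}" "set (map (snd \<circ> snd) \<nu>) \<subseteq> {..<d}"
    using \<nu> by auto
  ultimately have "cmod (fhat (i # ys) (map (fst \<circ> snd) \<nu> @ [b]) (map (snd \<circ> snd) \<nu>))
      \<le> B / \<delta> ^ length (map (snd \<circ> snd) \<nu>)"
    using \<open>b < n\<close> by (intro taylor_coeff_norm_le[OF _ _ _ _ _ series bounded \<delta>]) auto
  then show ?thesis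
    unfolding fab_def iys by simp
qed

section \<open>A coefficient bound for the radius of convergence\<close>

lemma powr_root_le:
  fixes S K :: real
  assumes "0 \<le> S" "S \<le> K ^ (2 * l)" "0 \<le> K" "1 \<le> l"
  shows "S powr (1 / (2 * real l)) \<le> K"
proof (cases "S = 0")
  case False
  then have "0 < K ^ (2 * l)"
    using assms(1,2) by linarith
  then have "0 < K"
    using assms(3,4) by (cases "K = 0") (auto simp: power_0_left)
  have "S powr (1 / (2 * real l)) \<le> (K ^ (2 * l)) powr (1 / (2 * real l))"
    using assms by (intro powr_mono2) auto
  also have "\<dots> = K"
    using \<open>0 < K\<close> assms(4) by (simp add: powr_realpow[symmetric] powr_powr)
  finally show ?thesis .
qed (use assms in simp)

lemma sum_sq_words_le:
  fixes g :: "'v list \<Rightarrow> complex"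
  assumes "finite V" "0 \<le> C" "\<And>\<nu>. set \<nu> \<subseteq> V \<Longrightarrow> length \<nu> = l \<Longrightarrow> cmod (g \<nu>) \<le> C ^ l"
  shows "(\<Sum>\<nu>\<in>{\<nu>. length \<nu> = l \<and> set \<nu> \<subseteq> V}. (cmod (g \<nu>))\<^sup>2) \<le> (sqrt (card V) * C) ^ (2 * l)"
proof -
  have "(\<Sum>\<nu>\<in>{\<nu>. length \<nu> = l \<and> set \<nu> \<subseteq> V}. (cmod (g \<nu>))\<^sup>2)
      \<le> (\<Sum>\<nu>\<in>{\<nu>. length \<nu> = l \<and> set \<nu> \<subseteq> V}. (C ^ l)\<^sup>2)"
    using assms(3) by (intro sum_mono power_mono) auto
  also have "\<dots> = card V ^ l * C ^ (2 * l)"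
    using card_lists_length_eq[OF assms(1), of l]
    by (simp add: conj_commute power_mult[symmetric] mult.commute)
  also have "\<dots> = (sqrt (card V) * C) ^ (2 * l)"
    by (simp add: power_mult_distrib power_mult)
  finally show ?thesis .
qed

lemma fps_radius_pos:
  fixes g :: "'v list \<Rightarrow> complex"
  assumes "finite V" "0 < \<delta>" "\<And>\<nu>. set \<nu> \<subseteq> V \<Longrightarrow> cmod (g \<nu>) \<le> B / \<delta> ^ length \<nu>"
  shows "0 < fps_radius V g"
proof -
  define C where "C = max 1 B / \<delta>"
  define K where "K = sqrt (card V) * C"
  have "0 < C" "0 \<le> K"
    unfolding K_def C_def using assms(2) by auto
  have "cmod (g \<nu>) \<le> C ^ l" if "set \<nu> \<subseteq> V" "length \<nu> = l" "1 \<le> l" for \<nu> l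
  proof -
    have "cmod (g \<nu>) \<le> B / \<delta> ^ l"
      using assms(3)[OF that(1)] that(2) by simp
    also have "\<dots> \<le> max 1 B / \<delta> ^ l"
      using assms(2) by (intro divide_right_mono) auto
    also have "\<dots> \<le> max 1 B ^ l / \<delta> ^ l"
      using assms(2) that(3) power_increasing[of 1 l "max 1 B"] by (intro divide_right_mono) auto
    finally show ?thesis
      unfolding C_def by (simp add: power_divide)
  qed
  then have "(\<Sum>\<nu>\<in>{\<nu>. length \<nu> = l \<and> set \<nu> \<subseteq> V}. (cmod (g \<nu>))\<^sup>2) powr (1 / (2 * real l)) \<le> K"
    if "1 \<le> l" for l
    using that \<open>0 < C\<close> \<open>0 \<le> K\<close> unfolding K_def
    by (intro powr_root_le sum_sq_words_le[OF assms(1)] sum_nonneg) auto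
  then have L: "limsup (\<lambda>l. ereal ((\<Sum>\<nu>\<in>{\<nu>. length \<nu> = l \<and> set \<nu> \<subseteq> V}. (cmod (g \<nu>))\<^sup>2)
      powr (1 / (2 * real l)))) \<le> ereal K"
    by (intro Limsup_bounded) (auto simp: eventually_sequentially intro!: exI[of _ 1])
  have "0 < inverse (ereal K)"
    using \<open>0 \<le> K\<close> by (cases "K = 0") auto
  also have "\<dots> \<le> fps_radius V g"
    unfolding fps_radius_def using L by (intro ereal_inverse_antimono le_Limsup) auto
  finally show ?thesis .
qed

theorem mainTheorem12:
  fixes d n :: nat and Y :: ctup and \<Omega> :: "(nat \<times> ctup) set"
    and f :: "nat \<Rightarrow> ctup \<Rightarrow> cmat"
    and fhat :: "nat list \<Rightarrow> nat list \<Rightarrow> nat list \<Rightarrow> complex"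
  assumes "1 \<le> d" and "1 \<le> n"
    and "wf_tup d n Y" and "(n, Y) \<in> \<Omega>"
    and "uniformly_analytic d \<Omega> f"
    and "\<exists>r>0. \<forall>m X. 1 \<le> m \<longrightarrow> wf_tup d (m * n) X \<longrightarrow>
           col_norm d (m * n) (tup_diff X (kron_id d m n Y)) < r \<longrightarrow>
           (m * n, X) \<in> \<Omega> \<and>
           (\<forall>P < m * n. \<forall>Q < m * n.
              (\<lambda>l. tt_term d n fhat Y m X l P Q) sums f (m * n) X P Q)"
  shows "\<forall>a<n. \<forall>b<n. fps_radius {(i, j, k). i < n \<and> j < n \<and> k < d} (fab fhat a b) > 0"
proof (intro allI impI)
  fix a b assume "a < n" "b < n"
  obtain r where "r > 0" and series: "tt_expansion_on d n fhat Y \<Omega> f r"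
    using assms(6) unfolding tt_expansion_on_def by blast
  obtain e B where "e > 0"
    and bounded: "\<And>s X. (s, X) \<in> uball d n Y e \<Longrightarrow> (s, X) \<in> \<Omega> \<Longrightarrow> op_norm s (f s X) \<le> B"
    using uniformly_analytic_bounded_on_uball[OF assms(5,4)] by blast
  define \<delta> where "\<delta> = min r e / 2"
  have \<delta>: "0 < \<delta>" "\<delta> < r" "\<delta> < e"
    unfolding \<delta>_def using \<open>r > 0\<close> \<open>e > 0\<close> by auto
  show "fps_radius {(i, j, k). i < n \<and> j < n \<and> k < d} (fab fhat a b) > 0"
  proof (rule fps_radius_pos[OF _ \<delta>(1)])
    show "finite {(i, j, k). i < n \<and> j < n \<and> k < d}"
      by (rule finite_subset[of _ "{..<n} \<times> {..<n} \<times> {..<d}"]) auto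
  qed (rule fab_norm_le[OF series bounded \<delta> \<open>a < n\<close> \<open>b < n\<close>])
qed

end
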